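(* Assume $A_n$ satisfies (C1) and (C2), and let $(\beta,B)\in\Theta$. Then $$\limsup_{n\to\infty}\frac1n\,\mathbb E_{n,\beta,B}\Big[\sum_{i=1}^n\Big(m_i(\mathbf X)-\sum_{j=1}^nA_n(i,j)\tanh(\beta m_j(\mathbf X)+B)\Big)\Big]^2<\infty.$$
   Context: For each $n$, $A_n$ is a known symmetric $n\times n$ matrix with non-negative entries and zero diagonal. The Ising model is $\mathbb P_{n,\beta,B}(\mathbf X=\mathbf x)=Z_n(\beta,B)^{-1}\exp(\frac{\beta}{2}\mathbf x^\top A_n\mathbf x+B\sum_i x_i)$ on $\{-1,1\}^n$, with expectation $\mathbb E_{n,\beta,B}$. (C1): there is a constant $\gamma<\infty$ with $\max_{i}\sum_{j}A_n(i,j)\le\gamma$ for all $n$; (C2): $\liminf_n\frac1n\sum_{i,j}A_n(i,j)>0$. $\Theta=\{(\beta,B):\beta>0,B\ne0\}$. $m_i(\mathbf x)=\sum_jA_n(i,j)x_j$. *)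

theory Defs
  imports "HOL-Analysis.Analysis"
begin

text \<open>Matrices are given as a sequence A :: nat => nat => nat => real,
  where A n i j is the (i,j) entry of A_n, indices i, j in {0..<n}.\<close>

definition spin_configs :: "nat \<Rightarrow> (nat \<Rightarrow> real) set" where
  "spin_configs n = PiE {..<n} (\<lambda>_. {-1, 1})"

definition local_field :: "(nat \<Rightarrow> nat \<Rightarrow> nat \<Rightarrow> real) \<Rightarrow> nat \<Rightarrow> (nat \<Rightarrow> real) \<Rightarrow> nat \<Rightarrow> real" where
  "local_field A n x i = (\<Sum>j<n. A n i j * x j)"

definition ising_weight :: "(nat \<Rightarrow> nat \<Rightarrow> nat \<Rightarrow> real) \<Rightarrow> real \<Rightarrow> real \<Rightarrow> nat \<Rightarrow> (nat \<Rightarrow> real) \<Rightarrow> real" where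
  "ising_weight A \<beta> B n x =
     exp (\<beta> / 2 * (\<Sum>i<n. \<Sum>j<n. x i * A n i j * x j) + B * (\<Sum>i<n. x i))"

definition ising_Z :: "(nat \<Rightarrow> nat \<Rightarrow> nat \<Rightarrow> real) \<Rightarrow> real \<Rightarrow> real \<Rightarrow> nat \<Rightarrow> real" where
  "ising_Z A \<beta> B n = (\<Sum>x\<in>spin_configs n. ising_weight A \<beta> B n x)"

definition ising_expect :: "(nat \<Rightarrow> nat \<Rightarrow> nat \<Rightarrow> real) \<Rightarrow> real \<Rightarrow> real \<Rightarrow> nat \<Rightarrow> ((nat \<Rightarrow> real) \<Rightarrow> real) \<Rightarrow> real" where
  "ising_expect A \<beta> B n f =
     (\<Sum>x\<in>spin_configs n. f x * ising_weight A \<beta> B n x) / ising_Z A \<beta> B n"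

end

theory Submission imports Defs begin

text \<open>Let \<open>d\<^sub>k = \<Sum>\<^sub>i A(i,k)\<close> and \<open>r\<^sub>k(x) = x\<^sub>k - tanh(\<beta> m\<^sub>k(x) + B)\<close>; the quantity in question is
  \<open>Q = \<Sum>\<^sub>k d\<^sub>k r\<^sub>k\<close>. Flipping spin \<open>k\<close> multiplies the Gibbs weight by \<open>exp(-2 x\<^sub>k (\<beta> m\<^sub>k + B))\<close>
  and leaves \<open>m\<^sub>k\<close> unchanged, so pairing each configuration with its flip shows
  \<open>E[r\<^sub>k g] = 0\<close> for every \<open>g\<close> not depending on \<open>x\<^sub>k\<close>. Taking \<open>g = Q(x with x\<^sub>k := 0)\<close> gives
  \<open>E[Q\<^sup>2] = \<Sum>\<^sub>k d\<^sub>k E[r\<^sub>k (Q(x) - Q(x with x\<^sub>k := 0))]\<close>. Since tanh is 1-Lipschitz, resetting one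
  spin changes \<open>Q\<close> by at most \<open>\<gamma> + \<beta>\<gamma>\<^sup>2\<close>, and \<open>|r\<^sub>k| \<le> 2\<close>, whence \<open>E[Q\<^sup>2] \<le> 2n\<gamma>(\<gamma> + \<beta>\<gamma>\<^sup>2)\<close>
  for every \<open>n\<close>.\<close>

definition spin_flip :: "nat \<Rightarrow> (nat \<Rightarrow> real) \<Rightarrow> nat \<Rightarrow> real" where
  "spin_flip j x = x(j := - x j)"

definition spin_residual ::
    "(nat \<Rightarrow> nat \<Rightarrow> nat \<Rightarrow> real) \<Rightarrow> real \<Rightarrow> real \<Rightarrow> nat \<Rightarrow> (nat \<Rightarrow> real) \<Rightarrow> nat \<Rightarrow> real" where
  "spin_residual A \<beta> B n x k = x k - tanh (\<beta> * local_field A n x k + B)"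

definition weighted_residual ::
    "(nat \<Rightarrow> nat \<Rightarrow> nat \<Rightarrow> real) \<Rightarrow> real \<Rightarrow> real \<Rightarrow> nat \<Rightarrow> (nat \<Rightarrow> real) \<Rightarrow> real" where
  "weighted_residual A \<beta> B n x = (\<Sum>k<n. (\<Sum>i<n. A n i k) * spin_residual A \<beta> B n x k)"

lemma finite_spin_configs: "finite (spin_configs n)"
  unfolding spin_configs_def by (auto intro: finite_PiE)

lemma spin_configs_values: "x \<in> spin_configs n \<Longrightarrow> j < n \<Longrightarrow> x j = 1 \<or> x j = -1"
  unfolding spin_configs_def by (auto simp: PiE_iff)

lemma spin_flip_in_spin_configs: "x \<in> spin_configs n \<Longrightarrow> j < n \<Longrightarrow> spin_flip j x \<in> spin_configs n"
  unfolding spin_configs_def spin_flip_def by (auto simp: PiE_iff extensional_def)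

lemma spin_flip_same [simp]: "spin_flip j x j = - x j"
  unfolding spin_flip_def by simp

lemma spin_flip_fun_upd_same [simp]: "(spin_flip j x)(j := v) = x(j := v)"
  unfolding spin_flip_def by simp

lemma spin_flip_spin_flip [simp]: "spin_flip j (spin_flip j x) = x"
  unfolding spin_flip_def by auto

lemma ising_weight_pos: "ising_weight A \<beta> B n x > 0"
  unfolding ising_weight_def by simp

lemma ising_Z_pos: "ising_Z A \<beta> B n > 0"
proof -
  have "(\<lambda>i. if i < n then 1 else undefined) \<in> spin_configs n"
    unfolding spin_configs_def by (auto simp: PiE_iff extensional_def)
  then show ?thesis
    unfolding ising_Z_def using finite_spin_configs ising_weight_pos
    by (metis empty_iff sum_pos)
qed

lemma sum_mult_fun_upd:
  fixes c :: "nat \<Rightarrow> real"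
  assumes "j < n"
  shows "(\<Sum>k<n. c k * (x(j := v)) k) = (\<Sum>k<n. c k * x k) + c j * (v - x j)"
proof -
  have "(\<Sum>k<n. c k * (x(j := v)) k) = (\<Sum>k<n. c k * x k + (if k = j then c j * (v - x j) else 0))"
    by (rule sum.cong) (auto simp: algebra_simps)
  also have "\<dots> = (\<Sum>k<n. c k * x k) + c j * (v - x j)"
    using assms by (simp add: sum.distrib)
  finally show ?thesis .
qed

lemma local_field_fun_upd:
  "j < n \<Longrightarrow> local_field A n (x(j := v)) i = local_field A n x i + A n i j * (v - x j)"
  unfolding local_field_def by (rule sum_mult_fun_upd)

lemma ising_quadratic_fun_upd:
  assumes j: "j < n"
    and sym: "\<And>i k. i < n \<Longrightarrow> k < n \<Longrightarrow> A n i k = A n k i"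
    and diag: "A n j j = 0"
  shows "(\<Sum>i<n. \<Sum>k<n. (x(j := v)) i * A n i k * (x(j := v)) k)
       = (\<Sum>i<n. \<Sum>k<n. x i * A n i k * x k) + 2 * (v - x j) * local_field A n x j"
proof -
  let ?y = "x(j := v)"
  have quadratic: "(\<Sum>i<n. \<Sum>k<n. z i * A n i k * z k) = (\<Sum>i<n. local_field A n z i * z i)" for z
    unfolding local_field_def by (simp add: sum_distrib_left sum_distrib_right ac_simps)
  have column: "(\<Sum>i<n. x i * A n i j) = local_field A n x j"
    unfolding local_field_def using sym j by (auto intro!: sum.cong simp: mult.commute)
  have "(\<Sum>i<n. local_field A n ?y i * ?y i)
      = (\<Sum>i<n. local_field A n x i * ?y i) + (v - x j) * (\<Sum>i<n. A n i j * ?y i)"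
    unfolding sum_distrib_left sum.distrib[symmetric]
    by (rule sum.cong) (simp_all add: local_field_fun_upd[OF j] algebra_simps del: fun_upd_apply)
  also have "\<dots> = (\<Sum>i<n. local_field A n x i * x i) + 2 * (v - x j) * local_field A n x j"
    using diag by (simp add: sum_mult_fun_upd[OF j] column algebra_simps del: fun_upd_apply)
  finally show ?thesis by (simp only: quadratic)
qed

lemma ising_weight_spin_flip:
  assumes "j < n"
    and "\<And>i k. i < n \<Longrightarrow> k < n \<Longrightarrow> A n i k = A n k i"
    and "A n j j = 0"
  shows "ising_weight A \<beta> B n (spin_flip j x)
     = ising_weight A \<beta> B n x * exp (-2 * x j * (\<beta> * local_field A n x j + B))"
proof -
  have quadratic: "(\<Sum>i<n. \<Sum>k<n. spin_flip j x i * A n i k * spin_flip j x k)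
       = (\<Sum>i<n. \<Sum>k<n. x i * A n i k * x k) - 4 * x j * local_field A n x j"
    unfolding spin_flip_def using ising_quadratic_fun_upd[of j n A x "- x j", OF assms] by simp
  have linear: "(\<Sum>i<n. spin_flip j x i) = (\<Sum>i<n. x i) - 2 * x j"
    unfolding spin_flip_def using sum_mult_fun_upd[OF assms(1), of "\<lambda>_. 1" x "- x j"] by simp
  show ?thesis
    unfolding ising_weight_def quadratic linear by (simp add: exp_add[symmetric] algebra_simps)
qed

lemma tanh_diff_le:
  fixes a b :: real
  assumes "a \<le> b"
  shows "tanh b - tanh a \<le> b - a"
proof -
  have "(\<lambda>x. x - tanh x) a \<le> (\<lambda>x. x - tanh x) b"
  proof (rule DERIV_nonneg_imp_nondecreasing[OF assms])
    show "\<exists>y. ((\<lambda>x. x - tanh x) has_real_derivative y) (at x) \<and> 0 \<le> y" for x :: real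
      by (rule exI[of _ "tanh x ^ 2"]) (auto intro!: derivative_eq_intros)
  qed
  then show ?thesis by simp
qed

lemma abs_tanh_diff_le: "\<bar>tanh a - tanh b\<bar> \<le> \<bar>a - b :: real\<bar>"
  using tanh_diff_le[of a b] tanh_diff_le[of b a] by (cases "a \<le> b") auto

lemma spin_tanh_balance:
  fixes s h :: real
  assumes "s = 1 \<or> s = -1"
  shows "(s - tanh h) + (- s - tanh h) * exp (-2 * s * h) = 0"
proof -
  have balance: "(1 - tanh t) + (-1 - tanh t) * exp (-2 * t) = 0" for t :: real
  proof -
    have "1 + exp (-2 * t) > 0" using exp_gt_zero[of "-2 * t"] by linarith
    then show ?thesis unfolding tanh_real_altdef by (simp add: field_simps)
  qed
  show ?thesis
    using assms balance[of h] balance[of "-h"] by (auto simp: algebra_simps)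
qed

text \<open>Conditionally on the other spins, \<open>x\<^sub>j\<close> has mean \<open>tanh(\<beta> m\<^sub>j + B)\<close>.\<close>

lemma sum_spin_residual_mult_flip_invariant:
  assumes j: "j < n"
    and sym: "\<And>i k. i < n \<Longrightarrow> k < n \<Longrightarrow> A n i k = A n k i"
    and diag: "A n j j = 0"
    and invariant: "\<And>x. x \<in> spin_configs n \<Longrightarrow> g (spin_flip j x) = g x"
  shows "(\<Sum>x\<in>spin_configs n. spin_residual A \<beta> B n x j * g x * ising_weight A \<beta> B n x) = 0"
proof -
  let ?S = "spin_configs n"
  define F where "F x = spin_residual A \<beta> B n x j * g x * ising_weight A \<beta> B n x" for x
  have reindex: "sum F ?S = sum (\<lambda>x. F (spin_flip j x)) ?S"
    by (rule sum.reindex_bij_witness[of _ "spin_flip j" "spin_flip j"])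
       (auto simp: spin_flip_in_spin_configs[OF _ j])
  have pair: "F x + F (spin_flip j x) = 0" if x: "x \<in> ?S" for x
  proof -
    let ?h = "\<beta> * local_field A n x j + B"
    have "local_field A n (spin_flip j x) j = local_field A n x j"
      unfolding spin_flip_def using diag by (simp add: local_field_fun_upd[OF j])
    then have "F (spin_flip j x) = (- x j - tanh ?h) * g x * (ising_weight A \<beta> B n x * exp (-2 * x j * ?h))"
      using ising_weight_spin_flip[of j n A, OF j sym diag, of \<beta> B x]
      by (simp add: F_def spin_residual_def invariant[OF x])
    then have "F x + F (spin_flip j x) = g x * ising_weight A \<beta> B n x *
        ((x j - tanh ?h) + (- x j - tanh ?h) * exp (-2 * x j * ?h))"
      by (simp add: F_def spin_residual_def algebra_simps)
    then show ?thesis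
      using spin_tanh_balance[OF spin_configs_values[OF x j]] by simp
  qed
  have "2 * sum F ?S = (\<Sum>x\<in>?S. F x + F (spin_flip j x))"
    using reindex by (simp add: sum.distrib)
  then show ?thesis using pair unfolding F_def by simp
qed

lemma sum_local_field_residuals_eq_weighted_residual:
  "(\<Sum>i<n. local_field A n x i - (\<Sum>j<n. A n i j * tanh (\<beta> * local_field A n x j + B)))
     = weighted_residual A \<beta> B n x"
proof -
  have "(\<Sum>i<n. \<Sum>j<n. A n i j * f j) = (\<Sum>j<n. (\<Sum>i<n. A n i j) * f j)" for f :: "nat \<Rightarrow> real"
    by (subst sum.swap) (simp add: sum_distrib_right)
  from this[of x] this[of "\<lambda>j. tanh (\<beta> * local_field A n x j + B)"] show ?thesis
    unfolding weighted_residual_def spin_residual_def sum_subtractf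
    by (simp add: local_field_def right_diff_distrib sum_subtractf)
qed

lemma spin_residual_fun_upd_bound:
  assumes k: "k < n" and "A n l k \<ge> 0" and "\<beta> \<ge> 0" and "\<bar>x k\<bar> \<le> 1"
  shows "\<bar>spin_residual A \<beta> B n x l - spin_residual A \<beta> B n (x(k := 0)) l\<bar>
           \<le> (if l = k then 1 else 0) + \<beta> * A n l k"
proof -
  let ?y = "x(k := 0)"
  have "\<bar>tanh (\<beta> * local_field A n x l + B) - tanh (\<beta> * local_field A n ?y l + B)\<bar>
        \<le> \<bar>\<beta> * (x k * A n l k)\<bar>"
    using abs_tanh_diff_le[of "\<beta> * local_field A n x l + B" "\<beta> * local_field A n ?y l + B"]
    by (simp add: local_field_fun_upd[OF k] algebra_simps)
  also have "\<dots> \<le> \<beta> * A n l k"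
    using assms mult_right_le_one_le[of "A n l k" "\<bar>x k\<bar>"]
    by (simp add: abs_mult mult_left_mono mult.commute)
  finally show ?thesis
    using assms(4) unfolding spin_residual_def by auto
qed

lemma weighted_residual_fun_upd_bound:
  assumes k: "k < n" and "\<bar>x k\<bar> \<le> 1" and "\<beta> \<ge> 0"
    and nonneg: "\<And>i l. i < n \<Longrightarrow> l < n \<Longrightarrow> A n i l \<ge> 0"
    and column: "\<And>l. l < n \<Longrightarrow> (\<Sum>i<n. A n i l) \<le> \<gamma>"
  shows "\<bar>weighted_residual A \<beta> B n x - weighted_residual A \<beta> B n (x(k := 0))\<bar> \<le> \<gamma> + \<beta> * \<gamma> * \<gamma>"
proof -
  define d where "d l = (\<Sum>i<n. A n i l)" for l
  have d_nonneg: "d l \<ge> 0" if "l < n" for l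
    unfolding d_def using nonneg that by (auto intro: sum_nonneg)
  have "\<bar>weighted_residual A \<beta> B n x - weighted_residual A \<beta> B n (x(k := 0))\<bar>
      \<le> (\<Sum>l<n. d l * \<bar>spin_residual A \<beta> B n x l - spin_residual A \<beta> B n (x(k := 0)) l\<bar>)"
    unfolding weighted_residual_def d_def[symmetric] sum_subtractf[symmetric]
      right_diff_distrib[symmetric]
    by (rule order_trans[OF sum_abs]) (simp add: abs_mult d_nonneg)
  also have "\<dots> \<le> (\<Sum>l<n. (if l = k then d l else 0) + \<gamma> * (\<beta> * A n l k))"
  proof (rule sum_mono)
    fix l assume l: "l \<in> {..<n}"
    have "d l * \<bar>spin_residual A \<beta> B n x l - spin_residual A \<beta> B n (x(k := 0)) l\<bar>
        \<le> d l * ((if l = k then 1 else 0) + \<beta> * A n l k)"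
      using l k assms(2,3) nonneg d_nonneg by (intro mult_left_mono spin_residual_fun_upd_bound) auto
    also have "\<dots> \<le> (if l = k then d l else 0) + \<gamma> * (\<beta> * A n l k)"
    proof -
      have "d l * (\<beta> * A n l k) \<le> \<gamma> * (\<beta> * A n l k)"
        using l k assms(3) nonneg[of l k] column[of l] unfolding d_def
        by (intro mult_right_mono) auto
      then show ?thesis by (cases "l = k") (simp_all add: distrib_left)
    qed
    finally show "d l * \<bar>spin_residual A \<beta> B n x l - spin_residual A \<beta> B n (x(k := 0)) l\<bar>
        \<le> (if l = k then d l else 0) + \<gamma> * (\<beta> * A n l k)" .
  qed
  also have "\<dots> = d k + \<gamma> * \<beta> * d k"
    using k by (simp add: sum.distrib sum_distrib_left[symmetric] d_def mult.assoc)
  also have "\<dots> \<le> \<gamma> + \<beta> * \<gamma> * \<gamma>"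
  proof -
    have "d k \<le> \<gamma>" using column[OF k] unfolding d_def .
    moreover have "\<gamma> * \<beta> * d k \<le> \<gamma> * \<beta> * \<gamma>"
      using calculation d_nonneg[OF k] assms(3) by (intro mult_left_mono) auto
    ultimately show ?thesis by (simp add: ac_simps)
  qed
  finally show ?thesis .
qed

lemma sum_spin_residual_mult_weighted_residual_le:
  assumes k: "k < n" and "\<beta> \<ge> 0"
    and sym: "\<And>i l. i < n \<Longrightarrow> l < n \<Longrightarrow> A n i l = A n l i"
    and nonneg: "\<And>i l. i < n \<Longrightarrow> l < n \<Longrightarrow> A n i l \<ge> 0"
    and diag: "A n k k = 0"
    and column: "\<And>l. l < n \<Longrightarrow> (\<Sum>i<n. A n i l) \<le> \<gamma>"
  shows "(\<Sum>x\<in>spin_configs n. spin_residual A \<beta> B n x k * weighted_residual A \<beta> B n x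
            * ising_weight A \<beta> B n x) \<le> 2 * (\<gamma> + \<beta> * \<gamma> * \<gamma>) * ising_Z A \<beta> B n"
proof -
  let ?r = "\<lambda>x. spin_residual A \<beta> B n x k" and ?Q = "weighted_residual A \<beta> B n"
    and ?w = "ising_weight A \<beta> B n"
  have "(\<Sum>x\<in>spin_configs n. ?r x * ?Q (x(k := 0)) * ?w x) = 0"
    using sum_spin_residual_mult_flip_invariant[where A = A and g = "\<lambda>y. ?Q (y(k := 0))", OF k sym diag]
    by simp
  then have "(\<Sum>x\<in>spin_configs n. ?r x * ?Q x * ?w x)
      = (\<Sum>x\<in>spin_configs n. ?r x * (?Q x - ?Q (x(k := 0))) * ?w x)"
    unfolding right_diff_distrib left_diff_distrib sum_subtractf by simp
  also have "\<dots> \<le> (\<Sum>x\<in>spin_configs n. 2 * (\<gamma> + \<beta> * \<gamma> * \<gamma>) * ?w x)"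
  proof (rule sum_mono)
    fix x assume x: "x \<in> spin_configs n"
    have xk: "\<bar>x k\<bar> \<le> 1" using spin_configs_values[OF x k] by auto
    have "\<bar>?r x\<bar> \<le> 2"
      using xk tanh_real_bounds[of "\<beta> * local_field A n x k + B"]
      unfolding spin_residual_def by auto
    moreover have "\<bar>?Q x - ?Q (x(k := 0))\<bar> \<le> \<gamma> + \<beta> * \<gamma> * \<gamma>"
      using weighted_residual_fun_upd_bound[where A = A and B = B and x = x, OF k xk assms(2) nonneg column] by simp
    ultimately have "\<bar>?r x\<bar> * \<bar>?Q x - ?Q (x(k := 0))\<bar> \<le> 2 * (\<gamma> + \<beta> * \<gamma> * \<gamma>)"
      by (intro mult_mono) auto
    then have "?r x * (?Q x - ?Q (x(k := 0))) \<le> 2 * (\<gamma> + \<beta> * \<gamma> * \<gamma>)"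
      by (metis abs_ge_self abs_mult order_trans)
    then show "?r x * (?Q x - ?Q (x(k := 0))) * ?w x \<le> 2 * (\<gamma> + \<beta> * \<gamma> * \<gamma>) * ?w x"
      using ising_weight_pos by (intro mult_right_mono) (auto simp: less_imp_le)
  qed
  also have "\<dots> = 2 * (\<gamma> + \<beta> * \<gamma> * \<gamma>) * ising_Z A \<beta> B n"
    unfolding ising_Z_def by (simp add: sum_distrib_left)
  finally show ?thesis .
qed

lemma ising_expect_weighted_residual_sq_le:
  assumes sym: "\<And>i l. i < n \<Longrightarrow> l < n \<Longrightarrow> A n i l = A n l i"
    and nonneg: "\<And>i l. i < n \<Longrightarrow> l < n \<Longrightarrow> A n i l \<ge> 0"
    and diag: "\<And>i. i < n \<Longrightarrow> A n i i = 0"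
    and row: "\<And>i. i < n \<Longrightarrow> (\<Sum>j<n. A n i j) \<le> \<gamma>"
    and "\<gamma> \<ge> 0" and "\<beta> \<ge> 0"
  shows "ising_expect A \<beta> B n (\<lambda>x. weighted_residual A \<beta> B n x ^ 2)
           \<le> real n * (2 * \<gamma> * (\<gamma> + \<beta> * \<gamma> * \<gamma>))"
proof -
  let ?r = "spin_residual A \<beta> B n" and ?Q = "weighted_residual A \<beta> B n"
    and ?w = "ising_weight A \<beta> B n" and ?Z = "ising_Z A \<beta> B n"
    and ?K = "2 * (\<gamma> + \<beta> * \<gamma> * \<gamma>)"
  have column: "(\<Sum>i<n. A n i l) \<le> \<gamma>" if "l < n" for l
  proof -
    have "(\<Sum>i<n. A n i l) = (\<Sum>i<n. A n l i)"
      using that by (intro sum.cong refl sym) auto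
    then show ?thesis using row[OF that] by simp
  qed
  have "(\<Sum>x\<in>spin_configs n. ?Q x ^ 2 * ?w x)
      = (\<Sum>k<n. (\<Sum>i<n. A n i k) * (\<Sum>x\<in>spin_configs n. ?r x k * ?Q x * ?w x))"
  proof -
    have "?Q x ^ 2 * ?w x = (\<Sum>k<n. (\<Sum>i<n. A n i k) * (?r x k * ?Q x * ?w x))" for x
    proof -
      have "?Q x ^ 2 * ?w x = (\<Sum>k<n. (\<Sum>i<n. A n i k) * ?r x k) * ?Q x * ?w x"
        unfolding power2_eq_square by (subst (1) weighted_residual_def) simp
      then show ?thesis by (simp add: sum_distrib_right mult.assoc)
    qed
    then show ?thesis
      by (simp add: sum.swap[of _ "spin_configs n"] sum_distrib_left)
  qed
  also have "\<dots> \<le> (\<Sum>k<n. \<gamma> * (?K * ?Z))"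
  proof (rule sum_mono)
    fix k assume "k \<in> {..<n}"
    then have k: "k < n" by simp
    have "(\<Sum>i<n. A n i k) * (\<Sum>x\<in>spin_configs n. ?r x k * ?Q x * ?w x)
        \<le> (\<Sum>i<n. A n i k) * (?K * ?Z)"
      using sum_spin_residual_mult_weighted_residual_le[where A = A and B = B,
          OF k assms(6) sym nonneg diag[OF k] column] nonneg k
      by (intro mult_left_mono) (auto intro: sum_nonneg)
    also have "\<dots> \<le> \<gamma> * (?K * ?Z)"
      using column[OF k] assms(5,6) ising_Z_pos[of A \<beta> B n] by (intro mult_right_mono) auto
    finally show "(\<Sum>i<n. A n i k) * (\<Sum>x\<in>spin_configs n. ?r x k * ?Q x * ?w x) \<le> \<gamma> * (?K * ?Z)" .
  qed
  finally have "(\<Sum>x\<in>spin_configs n. ?Q x ^ 2 * ?w x) \<le> real n * (2 * \<gamma> * (\<gamma> + \<beta> * \<gamma> * \<gamma>)) * ?Z"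
    by (simp add: ac_simps)
  then show ?thesis
    unfolding ising_expect_def using ising_Z_pos[of A \<beta> B n] by (simp add: pos_divide_le_eq)
qed

theorem lemma3:
  fixes A :: "nat \<Rightarrow> nat \<Rightarrow> nat \<Rightarrow> real" and \<beta> B :: real
  assumes sym: "\<And>n i j. i < n \<Longrightarrow> j < n \<Longrightarrow> A n i j = A n j i"
    and nonneg: "\<And>n i j. i < n \<Longrightarrow> j < n \<Longrightarrow> A n i j \<ge> 0"
    and diag: "\<And>n i. i < n \<Longrightarrow> A n i i = 0"
    and C1: "\<exists>\<gamma>::real. \<forall>n i. i < n \<longrightarrow> (\<Sum>j<n. A n i j) \<le> \<gamma>"
    and C2: "liminf (\<lambda>n. ereal ((1 / real n) * (\<Sum>i<n. \<Sum>j<n. A n i j))) > 0"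
    and beta_pos: "\<beta> > 0" and B_ne: "B \<noteq> 0"
  shows "limsup (\<lambda>n. ereal ((1 / real n) *
           ising_expect A \<beta> B n (\<lambda>x. (\<Sum>i<n. local_field A n x i
              - (\<Sum>j<n. A n i j * tanh (\<beta> * local_field A n x j + B))) ^ 2))) < \<infinity>"
proof -
  obtain \<gamma> :: real where row: "\<And>n i. i < n \<Longrightarrow> (\<Sum>j<n. A n i j) \<le> \<gamma>" using C1 by blast
  have "\<gamma> \<ge> 0" using row[of 0 1] diag[of 0 1] by simp
  define C where "C = 2 * \<gamma> * (\<gamma> + \<beta> * \<gamma> * \<gamma>)"
  have bound: "(1 / real n) * ising_expect A \<beta> B n (\<lambda>x. weighted_residual A \<beta> B n x ^ 2) \<le> C" for n
  proof (cases "n = 0")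
    case True
    then show ?thesis using \<open>\<gamma> \<ge> 0\<close> beta_pos by (simp add: C_def)
  next
    case False
    then show ?thesis
      using ising_expect_weighted_residual_sq_le[where A = A and n = n and \<beta> = \<beta> and B = B, OF sym nonneg diag row \<open>\<gamma> \<ge> 0\<close>]
        beta_pos unfolding C_def by (simp add: field_simps)
  qed
  have "limsup (\<lambda>n. ereal ((1 / real n) *
          ising_expect A \<beta> B n (\<lambda>x. weighted_residual A \<beta> B n x ^ 2))) \<le> ereal C"
    using bound by (intro Limsup_bounded always_eventually) simp
  then show ?thesis
    unfolding sum_local_field_residuals_eq_weighted_residual
    using order.strict_trans1 by fastforce
qed

end
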